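(* Consider the sequence of binary classification problems indexed by $m$ described in the context, with $N=n$, and suppose that $n=o(m)$, $m=o(n^2)$, and moreover $m=o(n^2/(\log n)^2)$ as $m\to\infty$. Let $\phi^F=\{\phi^F_m\}$ be the $\ell_2$-norm based classifier $\phi^F_m=\mathbb I\{F_n\ge 0\}$, where $$F_n=\Big\|\tfrac1n a^z-\tfrac1N a^x\Big\|_2^2-\Big\|\tfrac1n a^z-\tfrac1N a^y\Big\|_2^2 .$$ Then $J(\phi^F)=0$.
   Context: For each integer $m\ge1$ let $[m]=\{1,\dots,m\}$ be the alphabet. The sample sizes $N=N(m)$ and $n=n(m)$ are positive integers with $N,n\to\infty$ as $m\to\infty$. Fix constants $\varepsilon>0$ and $\bar c>0$ (a large positive constant). Let $\mathcal P_m$ be the set of pairs $(\pi,\mu)$ of probability distributions on $[m]$ with $\|\mu-\pi\|_1\ge\varepsilon$, $\max_j\pi_j\le \bar c/m$ and $\max_j\mu_j\le\bar c/m$. Two training sequences $X=(X_1,\dots,X_N)$ i.i.d. with marginal $\pi$ and $Y=(Y_1,\dots,Y_N)$ i.i.d. with marginal $\mu$, and a test sequence $Z=(Z_1,\dots,Z_n)$ i.i.d. with marginal $\nu$ are observed, the three sequences being independent; $\mathsf P_{(\pi,\mu,\nu)}$ denotes the corresponding probability. A classifier is a sequence $\phi=\{\phi_m\}$ of functions $\phi_m:[m]^N\times[m]^N\times[m]^n\to\{0,1\}$ (output $1$ means deciding that $Z$ comes from $\mu$). Its worst-case average probability of error is $$P_e(\phi_m)=\sup_{(\pi,\mu)\in\mathcal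 P_m}\Big[\tfrac12\mathsf P_{(\pi,\mu,\pi)}\{\phi_m=1\}+\tfrac12\mathsf P_{(\pi,\mu,\mu)}\{\phi_m=0\}\Big].$$ With $r(N,n,m)=\min\{N^2,Nn\}/m$, the generalized error exponent of $\phi$ is $J(\phi)=-\limsup_{m\to\infty}\frac{1}{r(N,n,m)}\log P_e(\phi_m)$. For $j\in[m]$, $a^x_j$, $a^y_j$, $a^z_j$ denote the number of times symbol $j$ appears in $X$, $Y$, $Z$ respectively, and $a^x=(a^x_j)_{j\in[m]}$ etc.; $\mathbb I$ is the indicator function. *)

theory Defs
  imports Complex_Main "HOL-Library.FuncSet" "HOL-Library.Landau_Symbols"
    "HOL-Library.Extended_Real" "HOL-Library.Liminf_Limsup"
begin

definition seqs :: "nat \<Rightarrow> nat \<Rightarrow> (nat \<Rightarrow> nat) set" where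
  "seqs m k = PiE {..<k} (\<lambda>_. {1..m})"

definition seq_prob :: "(nat \<Rightarrow> real) \<Rightarrow> nat \<Rightarrow> (nat \<Rightarrow> nat) \<Rightarrow> real" where
  "seq_prob p k x = (\<Prod>i<k. p (x i))"

text \<open>P_(pi,mu,nu){E(X,Y,Z)} for X,Y of length N and Z of length n, independent.\<close>
definition prob_event :: "nat \<Rightarrow> nat \<Rightarrow> nat \<Rightarrow> (nat \<Rightarrow> real) \<Rightarrow> (nat \<Rightarrow> real) \<Rightarrow> (nat \<Rightarrow> real)
    \<Rightarrow> ((nat \<Rightarrow> nat) \<Rightarrow> (nat \<Rightarrow> nat) \<Rightarrow> (nat \<Rightarrow> nat) \<Rightarrow> bool) \<Rightarrow> real" where
  "prob_event m N n p q r E =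
     (\<Sum>x\<in>seqs m N. \<Sum>y\<in>seqs m N. \<Sum>z\<in>seqs m n.
        seq_prob p N x * seq_prob q N y * seq_prob r n z * (if E x y z then 1 else 0))"

definition is_dist :: "nat \<Rightarrow> (nat \<Rightarrow> real) \<Rightarrow> bool" where
  "is_dist m p \<longleftrightarrow> (\<forall>j\<in>{1..m}. 0 \<le> p j) \<and> (\<Sum>j\<in>{1..m}. p j) = 1"

definition Pclass :: "nat \<Rightarrow> real \<Rightarrow> real \<Rightarrow> ((nat \<Rightarrow> real) \<times> (nat \<Rightarrow> real)) set" where
  "Pclass m \<epsilon> c = {(p, q). is_dist m p \<and> is_dist m q \<and> (\<Sum>j\<in>{1..m}. \<bar>q j - p j\<bar>) \<ge> \<epsilon>
        \<and> (\<forall>j\<in>{1..m}. p j \<le> c / real m) \<and> (\<forall>j\<in>{1..m}. q j \<le> c / real m)}"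

text \<open>Classifier output True means "decide Z comes from mu" (output 1).\<close>
definition avg_err :: "nat \<Rightarrow> nat \<Rightarrow> nat
    \<Rightarrow> ((nat \<Rightarrow> nat) \<Rightarrow> (nat \<Rightarrow> nat) \<Rightarrow> (nat \<Rightarrow> nat) \<Rightarrow> bool)
    \<Rightarrow> (nat \<Rightarrow> real) \<Rightarrow> (nat \<Rightarrow> real) \<Rightarrow> real" where
  "avg_err m N n \<phi> p q =
     1/2 * prob_event m N n p q p \<phi> + 1/2 * prob_event m N n p q q (\<lambda>x y z. \<not> \<phi> x y z)"

definition worst_err :: "nat \<Rightarrow> nat \<Rightarrow> nat \<Rightarrow> real \<Rightarrow> real
    \<Rightarrow> ((nat \<Rightarrow> nat) \<Rightarrow> (nat \<Rightarrow> nat) \<Rightarrow> (nat \<Rightarrow> nat) \<Rightarrow> bool) \<Rightarrow> real" where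
  "worst_err m N n \<epsilon> c \<phi> = Sup ((\<lambda>(p, q). avg_err m N n \<phi> p q) ` Pclass m \<epsilon> c)"

definition elog :: "real \<Rightarrow> ereal" where
  "elog x = (if x > 0 then ereal (ln x) else -\<infinity>)"

definition rate :: "nat \<Rightarrow> nat \<Rightarrow> nat \<Rightarrow> real" where
  "rate N n m = real (min (N^2) (N * n)) / real m"

definition err_exponent :: "(nat \<Rightarrow> nat) \<Rightarrow> (nat \<Rightarrow> nat) \<Rightarrow> real \<Rightarrow> real
    \<Rightarrow> (nat \<Rightarrow> (nat \<Rightarrow> nat) \<Rightarrow> (nat \<Rightarrow> nat) \<Rightarrow> (nat \<Rightarrow> nat) \<Rightarrow> bool) \<Rightarrow> ereal" where
  "err_exponent N n \<epsilon> c \<phi> =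
     - limsup (\<lambda>m. elog (worst_err m (N m) (n m) \<epsilon> c (\<phi> m)) / ereal (rate (N m) (n m) m))"

definition count :: "nat \<Rightarrow> (nat \<Rightarrow> nat) \<Rightarrow> nat \<Rightarrow> nat" where
  "count k x j = card {i. i < k \<and> x i = j}"

definition F_stat :: "nat \<Rightarrow> nat \<Rightarrow> nat \<Rightarrow> (nat \<Rightarrow> nat) \<Rightarrow> (nat \<Rightarrow> nat) \<Rightarrow> (nat \<Rightarrow> nat) \<Rightarrow> real" where
  "F_stat m N n x y z =
     (\<Sum>j\<in>{1..m}. (real (count n z j) / real n - real (count N x j) / real N)\<^sup>2)
   - (\<Sum>j\<in>{1..m}. (real (count n z j) / real n - real (count N y j) / real N)\<^sup>2)"

definition phi_F :: "nat \<Rightarrow> nat \<Rightarrow> nat \<Rightarrow> (nat \<Rightarrow> nat) \<Rightarrow> (nat \<Rightarrow> nat) \<Rightarrow> (nat \<Rightarrow> nat) \<Rightarrow> bool" where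
  "phi_F m N n x y z \<longleftrightarrow> F_stat m N n x y z \<ge> 0"

end

theory Submission
  imports Defs
begin

text \<open>Let j0 be a symbol with pi j0 >= 1/m. With probability at least m^-K the first training
  sequence X starts with K copies of j0, and then |a^x|^2 >= n + K(K-1). Since
  n^2 F >= |a^x|^2 - |a^y|^2 - 2<a^z, a^x>, the classifier decides for mu as soon as the
  collision statistic (|a^y|^2 - n) + 2<a^x, a^z> is at most K(K-1). For Z drawn from pi its
  expectation is at most 3 c n^2/m, so by Markov's inequality this happens with probability
  at least 1/2 once K(K-1) >= 6 c n^2/m, i.e. for K ~ sqrt(6c) n / sqrt m. Hence
  P_e >= m^-K / 4, and (K ln m) m / n^2 = O(sqrt m ln n / n) tends to 0 when
  m = o(n^2 / (ln n)^2); together with P_e <= 1 this gives J = 0.\<close>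

section \<open>I.i.d. sequences\<close>

lemma seqs_memD: "x \<in> seqs m k \<Longrightarrow> i < k \<Longrightarrow> x i \<in> {1..m}"
  unfolding seqs_def by (simp add: PiE_iff)

lemma sum_seqs_prod:
  "(\<Sum>x\<in>seqs m k. \<Prod>i<k. h i (x i)) = (\<Prod>i<k. \<Sum>j\<in>{1..m}. (h i j :: real))"
  unfolding seqs_def using prod_sum_PiE[of "{..<k}" "\<lambda>_. {1..m}" h] by simp

lemma seq_prob_nonneg: "is_dist m p \<Longrightarrow> x \<in> seqs m k \<Longrightarrow> seq_prob p k x \<ge> 0"
  unfolding seq_prob_def is_dist_def by (intro prod_nonneg) (meson lessThan_iff seqs_memD)

lemma sum_seq_prob_mult_prod:
  assumes "is_dist m p" "I \<subseteq> {..<k}"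
  shows "(\<Sum>x\<in>seqs m k. seq_prob p k x * (\<Prod>i\<in>I. f i (x i)))
       = (\<Prod>i\<in>I. \<Sum>j\<in>{1..m}. p j * f i j)"
proof -
  have restrict: "(\<Prod>i<k. if i \<in> I then g i else 1) = prod g I" for g :: "nat \<Rightarrow> real"
    using prod.inter_restrict[of "{..<k}" g I] assms(2) by (simp add: Int_absorb1)
  have "(\<Sum>x\<in>seqs m k. seq_prob p k x * (\<Prod>i\<in>I. f i (x i)))
      = (\<Sum>x\<in>seqs m k. \<Prod>i<k. p (x i) * (if i \<in> I then f i (x i) else 1))"
    by (simp only: seq_prob_def prod.distrib restrict)
  also have "\<dots> = (\<Prod>i<k. \<Sum>j\<in>{1..m}. p j * (if i \<in> I then f i j else 1))"
    by (rule sum_seqs_prod)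
  also have "\<dots> = (\<Prod>i<k. if i \<in> I then (\<Sum>j\<in>{1..m}. p j * f i j) else 1)"
    using assms(1) by (intro prod.cong) (auto simp: is_dist_def)
  also have "\<dots> = (\<Prod>i\<in>I. \<Sum>j\<in>{1..m}. p j * f i j)"
    by (rule restrict)
  finally show ?thesis .
qed

lemma sum_seq_prob: "is_dist m p \<Longrightarrow> (\<Sum>x\<in>seqs m k. seq_prob p k x) = 1"
  using sum_seq_prob_mult_prod[of m p "{}" k] by simp

lemma sum_seq_prob_mult_coord:
  assumes "is_dist m p" "i < k"
  shows "(\<Sum>x\<in>seqs m k. seq_prob p k x * g (x i)) = (\<Sum>j\<in>{1..m}. p j * g j)"
  using sum_seq_prob_mult_prod[of m p "{i}" k "\<lambda>_. g"] assms by simp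

lemma sum_seq_prob_mult_coord_pair:
  assumes "is_dist m p" "i < k" "i' < k" "i \<noteq> i'"
  shows "(\<Sum>x\<in>seqs m k. seq_prob p k x * (g (x i) * h (x i')))
       = (\<Sum>j\<in>{1..m}. p j * g j) * (\<Sum>j\<in>{1..m}. p j * h j)"
  using sum_seq_prob_mult_prod[of m p "{i, i'}" k "\<lambda>l. if l = i then g else h"] assms by simp

lemma sum_seq_prob_const_prefix:
  assumes "is_dist m p" "K \<le> k" "j0 \<in> {1..m}"
  shows "(\<Sum>x\<in>seqs m k. seq_prob p k x * (if \<forall>i<K. x i = j0 then 1 else 0)) = p j0 ^ K"
proof -
  have prefix: "(\<Prod>i<K. if x i = j0 then 1 else 0) = (if \<forall>i<K. x i = j0 then 1 else (0::real))"
    for x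
  proof (cases "\<forall>i<K. x i = j0")
    case False
    then obtain i where "i < K" "x i \<noteq> j0" by auto
    then show ?thesis by (intro trans[OF prod_zero]) auto
  qed simp
  have "(\<Sum>j\<in>{1..m}. p j * (if j = j0 then 1 else 0)) = p j0"
    using assms(3) by (simp add: if_distrib sum.delta cong: if_cong)
  then show ?thesis
    using sum_seq_prob_mult_prod[of m p "{..<K}" k "\<lambda>_ j. if j = j0 then 1 else 0"] assms(1,2)
    by (simp only: prefix) simp
qed

lemma sum_seq_prob_coincidence:
  assumes "is_dist m p" "i < k" "i' < k" "i \<noteq> i'"
  shows "(\<Sum>x\<in>seqs m k. seq_prob p k x * (if x i = x i' then 1 else 0)) = (\<Sum>j\<in>{1..m}. p j ^ 2)"
proof -
  have "(if x i = x i' then 1 else 0)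
      = (\<Sum>j\<in>{1..m}. (if x i = j then 1 else 0) * (if x i' = j then 1 else (0::real)))"
    if "x \<in> seqs m k" for x
  proof -
    have "(\<Sum>j\<in>{1..m}. (if x i = j then 1 else 0) * (if x i' = j then 1 else (0::real)))
        = (\<Sum>j\<in>{1..m}. if j = x i then (if x i = x i' then 1 else 0) else 0)"
      by (intro sum.cong) auto
    then show ?thesis using seqs_memD[OF that assms(2)] by simp
  qed
  then have "(\<Sum>x\<in>seqs m k. seq_prob p k x * (if x i = x i' then 1 else 0))
      = (\<Sum>x\<in>seqs m k. \<Sum>j\<in>{1..m}. seq_prob p k x
           * ((if x i = j then 1 else 0) * (if x i' = j then 1 else 0)))"
    by (simp add: sum_distrib_left)
  also have "\<dots> = (\<Sum>j\<in>{1..m}. \<Sum>x\<in>seqs m k. seq_prob p k x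
           * ((if x i = j then 1 else 0) * (if x i' = j then 1 else 0)))"
    by (rule sum.swap)
  also have "\<dots> = (\<Sum>j\<in>{1..m}. (\<Sum>l\<in>{1..m}. p l * (if l = j then 1 else 0))
                                  * (\<Sum>l\<in>{1..m}. p l * (if l = j then 1 else 0)))"
    by (intro sum.cong refl sum_seq_prob_mult_coord_pair[OF assms])
  also have "\<dots> = (\<Sum>j\<in>{1..m}. p j ^ 2)"
    by (intro sum.cong refl) (simp add: if_distrib sum.delta power2_eq_square cong: if_cong)
  finally show ?thesis .
qed

section \<open>Symbol counts\<close>

lemma count_eq_sum: "real (count k x j) = (\<Sum>i<k. if x i = j then 1 else 0)"
proof -
  have "count k x j = card {i\<in>{..<k}. x i = j}"
    unfolding count_def by (rule arg_cong[where f=card]) auto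
  then have "real (count k x j) = (\<Sum>i\<in>{i\<in>{..<k}. x i = j}. 1)"
    by (simp only: real_of_card)
  also have "\<dots> = (\<Sum>i<k. if x i = j then 1 else 0)" by (rule sum.inter_filter) simp
  finally show ?thesis .
qed

lemma sum_count_mult:
  assumes "z \<in> seqs m k"
  shows "(\<Sum>j\<in>{1..m}. real (count k z j) * a j) = (\<Sum>i<k. (a (z i) :: real))"
proof -
  have "(\<Sum>j\<in>{1..m}. real (count k z j) * a j) = (\<Sum>j\<in>{1..m}. \<Sum>i<k. if z i = j then a j else 0)"
    unfolding count_eq_sum sum_distrib_right by (intro sum.cong refl) simp
  also have "\<dots> = (\<Sum>i<k. \<Sum>j\<in>{1..m}. if z i = j then a j else 0)" by (rule sum.swap)
  also have "\<dots> = (\<Sum>i<k. a (z i))"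
    using seqs_memD[OF assms] by (intro sum.cong refl) (simp add: sum.delta')
  finally show ?thesis .
qed

lemma sum_count:
  assumes "z \<in> seqs m k"
  shows "(\<Sum>j\<in>{1..m}. real (count k z j)) = real k"
  using sum_count_mult[OF assms, of "\<lambda>_. 1"] by simp

lemma sum_count_squared:
  assumes "z \<in> seqs m k"
  shows "(\<Sum>j\<in>{1..m}. real (count k z j) ^ 2) = (\<Sum>i<k. \<Sum>i'<k. if z i = z i' then 1 else 0)"
proof -
  have "(\<Sum>j\<in>{1..m}. real (count k z j) ^ 2) = (\<Sum>i<k. real (count k z (z i)))"
    using sum_count_mult[OF assms, of "\<lambda>j. real (count k z j)"] by (simp add: power2_eq_square)
  also have "\<dots> = (\<Sum>i<k. \<Sum>i'<k. if z i' = z i then 1 else 0)"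
    by (simp only: count_eq_sum)
  also have "\<dots> = (\<Sum>i<k. \<Sum>i'<k. if z i = z i' then 1 else 0)"
    by (intro sum.cong refl) auto
  finally show ?thesis .
qed

lemma sum_seq_prob_mult_sum_positions:
  assumes "is_dist m p"
  shows "(\<Sum>z\<in>seqs m k. seq_prob p k z * (\<Sum>i<k. a (z i))) = real k * (\<Sum>j\<in>{1..m}. p j * a j)"
proof -
  have "(\<Sum>z\<in>seqs m k. seq_prob p k z * (\<Sum>i<k. a (z i)))
      = (\<Sum>i<k. \<Sum>z\<in>seqs m k. seq_prob p k z * a (z i))"
    by (simp add: sum_distrib_left sum.swap[of _ "seqs m k"])
  then show ?thesis by (simp add: sum_seq_prob_mult_coord[OF assms])
qed

lemma sum_seq_prob_mult_sum_count_squared_le: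
  assumes "is_dist m p" "\<forall>j\<in>{1..m}. p j \<le> b" "b \<ge> 0"
  shows "(\<Sum>y\<in>seqs m k. seq_prob p k y * (\<Sum>j\<in>{1..m}. real (count k y j) ^ 2))
       \<le> real k + real k ^ 2 * b"
proof -
  have sum_sq_le: "(\<Sum>j\<in>{1..m}. p j ^ 2) \<le> b"
  proof -
    have "(\<Sum>j\<in>{1..m}. p j ^ 2) \<le> (\<Sum>j\<in>{1..m}. b * p j)"
      using assms unfolding is_dist_def power2_eq_square by (intro sum_mono mult_right_mono) auto
    also have "\<dots> = b" using assms(1) by (simp add: is_dist_def flip: sum_distrib_left)
    finally show ?thesis .
  qed
  have "(\<Sum>y\<in>seqs m k. seq_prob p k y * (\<Sum>j\<in>{1..m}. real (count k y j) ^ 2))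
      = (\<Sum>y\<in>seqs m k. \<Sum>i<k. \<Sum>i'<k. seq_prob p k y * (if y i = y i' then 1 else 0))"
  proof (intro sum.cong refl)
    fix y assume "y \<in> seqs m k"
    from sum_count_squared[OF this]
    show "seq_prob p k y * (\<Sum>j\<in>{1..m}. real (count k y j) ^ 2)
        = (\<Sum>i<k. \<Sum>i'<k. seq_prob p k y * (if y i = y i' then 1 else 0))"
      by (simp add: sum_distrib_left)
  qed
  also have "\<dots> = (\<Sum>i<k. \<Sum>i'<k. \<Sum>y\<in>seqs m k. seq_prob p k y * (if y i = y i' then 1 else 0))"
    by (simp only: sum.swap[of _ "seqs m k"])
  also have "\<dots> \<le> (\<Sum>i<k. \<Sum>i'<k. (if i = i' then 1 else 0) + b)"
  proof (intro sum_mono)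
    fix i i' assume "i \<in> {..<k}" "i' \<in> {..<k}"
    then show "(\<Sum>y\<in>seqs m k. seq_prob p k y * (if y i = y i' then 1 else 0))
             \<le> (if i = i' then 1 else 0) + b"
      using sum_seq_prob[OF assms(1)] sum_seq_prob_coincidence[OF assms(1)] sum_sq_le assms(3)
      by (cases "i = i'") auto
  qed
  also have "\<dots> = real k + real k ^ 2 * b"
    by (simp add: sum.distrib power2_eq_square algebra_simps)
  finally show ?thesis .
qed

section \<open>A heavy prefix of the first training sequence forces an error\<close>

lemma count_ge_const_prefix:
  assumes "K \<le> n" "\<forall>i<K. x i = j0"
  shows "K \<le> count n x j0"
proof -
  have "card {..<K} \<le> card {i. i < n \<and> x i = j0}"
    using assms by (intro card_mono) auto
  then show ?thesis unfolding count_def by simp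
qed

lemma sum_count_squared_ge_const_prefix:
  assumes "x \<in> seqs m n" "K \<le> n" "\<forall>i<K. x i = j0" "j0 \<in> {1..m}"
  shows "real n + real K * (real K - 1) \<le> (\<Sum>j\<in>{1..m}. real (count n x j) ^ 2)"
proof -
  have pronic_nonneg: "0 \<le> real a * (real a - 1)" for a :: nat
    by (cases a) auto
  have nat_pronic: "real K * (real K - 1) \<le> real a * (real a - 1)" if "K \<le> a" for a :: nat
    using that pronic_nonneg[of a] by (cases K) (auto intro: mult_mono)
  have "real K * (real K - 1) \<le> real (count n x j0) * (real (count n x j0) - 1)"
    using nat_pronic[OF count_ge_const_prefix[OF assms(2,3)]] .
  also have "\<dots> \<le> (\<Sum>j\<in>{1..m}. real (count n x j) * (real (count n x j) - 1))"
    using assms(4) by (intro member_le_sum) (auto simp: pronic_nonneg)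
  also have "\<dots> = (\<Sum>j\<in>{1..m}. real (count n x j) ^ 2) - real n"
    using sum_count[OF assms(1)] by (simp add: algebra_simps power2_eq_square sum_subtractf)
  finally show ?thesis by simp
qed

text \<open>Expanding both squares, n^2 F = |a^x|^2 - |a^y|^2 - 2<a^z, a^x> + 2<a^z, a^y>,
  and the last term is nonnegative.\<close>
lemma F_stat_diag_lower_bound:
  assumes "z \<in> seqs m n" "n > 0"
  shows "(\<Sum>j\<in>{1..m}. real (count n x j) ^ 2) - (\<Sum>j\<in>{1..m}. real (count n y j) ^ 2)
         - 2 * (\<Sum>i<n. real (count n x (z i))) \<le> real n ^ 2 * F_stat m n n x y z"
proof -
  define cx cy cz where "cx j = real (count n x j)" and "cy j = real (count n y j)"
    and "cz j = real (count n z j)" for j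
  have "real n ^ 2 * F_stat m n n x y z
      = (\<Sum>j\<in>{1..m}. (cz j - cx j)\<^sup>2) - (\<Sum>j\<in>{1..m}. (cz j - cy j)\<^sup>2)"
    using assms(2) unfolding F_stat_def cx_def cy_def cz_def
    by (simp add: power_divide right_diff_distrib sum_distrib_left flip: diff_divide_distrib)
  also have "\<dots> = (\<Sum>j\<in>{1..m}. cx j ^ 2) - (\<Sum>j\<in>{1..m}. cy j ^ 2)
      - 2 * (\<Sum>j\<in>{1..m}. cz j * cx j) + 2 * (\<Sum>j\<in>{1..m}. cz j * cy j)"
    by (simp add: power2_eq_square algebra_simps sum_subtractf sum.distrib sum_distrib_left)
  also have "(\<Sum>j\<in>{1..m}. cz j * cx j) = (\<Sum>i<n. cx (z i))"
    unfolding cz_def by (rule sum_count_mult[OF assms(1)])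
  finally have expansion: "real n ^ 2 * F_stat m n n x y z = (\<Sum>j\<in>{1..m}. cx j ^ 2)
      - (\<Sum>j\<in>{1..m}. cy j ^ 2) - 2 * (\<Sum>i<n. cx (z i)) + 2 * (\<Sum>j\<in>{1..m}. cz j * cy j)" .
  have "0 \<le> (\<Sum>j\<in>{1..m}. cz j * cy j)"
    unfolding cz_def cy_def by (intro sum_nonneg) simp
  with expansion show ?thesis unfolding cx_def cy_def by linarith
qed

definition collision_stat :: "nat \<Rightarrow> nat \<Rightarrow> (nat \<Rightarrow> nat) \<Rightarrow> (nat \<Rightarrow> nat) \<Rightarrow> (nat \<Rightarrow> nat) \<Rightarrow> real"
  where "collision_stat m n x y z =
    (\<Sum>j\<in>{1..m}. real (count n y j) ^ 2) - real n + 2 * (\<Sum>i<n. real (count n x (z i)))"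

lemma phi_F_if_const_prefix:
  assumes "x \<in> seqs m n" "z \<in> seqs m n" "n > 0" "K \<le> n" "\<forall>i<K. x i = j0" "j0 \<in> {1..m}"
    and "collision_stat m n x y z \<le> real K * (real K - 1)"
  shows "phi_F m n n x y z"
proof -
  have "0 \<le> real n ^ 2 * F_stat m n n x y z"
    using sum_count_squared_ge_const_prefix[OF assms(1,4-6)] F_stat_diag_lower_bound[OF assms(2,3), of x y]
      assms(7) unfolding collision_stat_def by linarith
  then show ?thesis using assms(3) unfolding phi_F_def by (simp add: zero_le_mult_iff)
qed

lemma collision_stat_nonneg:
  assumes "y \<in> seqs m n"
  shows "0 \<le> collision_stat m n x y z"
proof -
  have "(\<Sum>j\<in>{1..m}. real (count n y j)) \<le> (\<Sum>j\<in>{1..m}. real (count n y j) ^ 2)"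
    by (intro sum_mono) (metis le_square of_nat_le_iff of_nat_mult power2_eq_square)
  moreover have "0 \<le> (\<Sum>i<n. real (count n x (z i)))" by (intro sum_nonneg) simp
  ultimately show ?thesis unfolding collision_stat_def using sum_count[OF assms] by linarith
qed

lemma markov_inequality_product:
  fixes P :: "'a \<Rightarrow> real" and Q :: "'b \<Rightarrow> real"
  assumes "\<forall>y\<in>Y. 0 \<le> P y" "\<forall>z\<in>Z. 0 \<le> Q z" "sum P Y = 1" "sum Q Z = 1"
    and "\<forall>y\<in>Y. \<forall>z\<in>Z. 0 \<le> W y z" "t > 0"
  shows "1 - (\<Sum>y\<in>Y. \<Sum>z\<in>Z. P y * Q z * W y z) / t
       \<le> (\<Sum>y\<in>Y. \<Sum>z\<in>Z. P y * Q z * (if W y z \<le> t then 1 else 0))"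
proof -
  have "(\<Sum>y\<in>Y. \<Sum>z\<in>Z. P y * Q z) = 1"
    using assms(3,4) by (simp flip: sum_distrib_left sum_distrib_right)
  then have "1 - (\<Sum>y\<in>Y. \<Sum>z\<in>Z. P y * Q z * W y z) / t
      = (\<Sum>y\<in>Y. \<Sum>z\<in>Z. P y * Q z * (1 - W y z / t))"
    by (simp add: algebra_simps sum_subtractf sum_divide_distrib)
  also have "\<dots> \<le> (\<Sum>y\<in>Y. \<Sum>z\<in>Z. P y * Q z * (if W y z \<le> t then 1 else 0))"
    using assms(1,2,5,6) by (intro sum_mono mult_left_mono) (auto simp: field_simps)
  finally show ?thesis .
qed

lemma sum_product_weights_add:
  fixes P :: "'a \<Rightarrow> real" and Q :: "'b \<Rightarrow> real"
  assumes "sum P Y = 1" "sum Q Z = 1"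
  shows "(\<Sum>y\<in>Y. \<Sum>z\<in>Z. P y * Q z * (A y + C z)) = (\<Sum>y\<in>Y. P y * A y) + (\<Sum>z\<in>Z. Q z * C z)"
proof -
  have "(\<Sum>y\<in>Y. \<Sum>z\<in>Z. P y * Q z * (A y + C z))
      = (\<Sum>y\<in>Y. P y * A y * (\<Sum>z\<in>Z. Q z) + P y * (\<Sum>z\<in>Z. Q z * C z))"
    by (simp add: algebra_simps sum.distrib sum_distrib_left)
  also have "\<dots> = (\<Sum>y\<in>Y. P y * A y) + (\<Sum>y\<in>Y. P y) * (\<Sum>z\<in>Z. Q z * C z)"
    using assms(2) by (simp add: sum.distrib sum_distrib_right)
  finally show ?thesis using assms(1) by simp
qed

lemma sum_seq_prob_collision_stat_le:
  assumes "is_dist m p" "is_dist m q" "\<forall>j\<in>{1..m}. p j \<le> b" "\<forall>j\<in>{1..m}. q j \<le> b" "b \<ge> 0"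
    and "x \<in> seqs m n"
  shows "(\<Sum>y\<in>seqs m n. \<Sum>z\<in>seqs m n. seq_prob q n y * seq_prob p n z * collision_stat m n x y z)
       \<le> 3 * (real n ^ 2 * b)"
proof -
  have collisions: "(\<Sum>y\<in>seqs m n. seq_prob q n y * (\<Sum>j\<in>{1..m}. real (count n y j) ^ 2)) - real n
      \<le> real n ^ 2 * b"
    using sum_seq_prob_mult_sum_count_squared_le[OF assms(2,4,5), of n] by linarith
  have "(\<Sum>z\<in>seqs m n. seq_prob p n z * (\<Sum>i<n. real (count n x (z i))))
      = real n * (\<Sum>j\<in>{1..m}. p j * real (count n x j))"
    by (rule sum_seq_prob_mult_sum_positions[OF assms(1)])
  also have "\<dots> \<le> real n * (\<Sum>j\<in>{1..m}. b * real (count n x j))"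
    using assms(3) by (intro mult_left_mono sum_mono mult_right_mono) auto
  also have "\<dots> = real n ^ 2 * b"
    using sum_count[OF assms(6)] by (simp add: power2_eq_square flip: sum_distrib_left)
  finally have cross: "(\<Sum>z\<in>seqs m n. seq_prob p n z * (\<Sum>i<n. real (count n x (z i))))
      \<le> real n ^ 2 * b" .
  have "(\<Sum>y\<in>seqs m n. \<Sum>z\<in>seqs m n. seq_prob q n y * seq_prob p n z * collision_stat m n x y z)
      = (\<Sum>y\<in>seqs m n. seq_prob q n y * ((\<Sum>j\<in>{1..m}. real (count n y j) ^ 2) - real n))
        + (\<Sum>z\<in>seqs m n. seq_prob p n z * (2 * (\<Sum>i<n. real (count n x (z i)))))"
    unfolding collision_stat_def
    by (rule sum_product_weights_add[OF sum_seq_prob[OF assms(2)] sum_seq_prob[OF assms(1)]])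
  also have "\<dots> = (\<Sum>y\<in>seqs m n. seq_prob q n y * (\<Sum>j\<in>{1..m}. real (count n y j) ^ 2)) - real n
        + 2 * (\<Sum>z\<in>seqs m n. seq_prob p n z * (\<Sum>i<n. real (count n x (z i))))"
    using sum_seq_prob[OF assms(2), of n]
    by (simp add: right_diff_distrib sum_subtractf sum_distrib_left algebra_simps
        flip: sum_distrib_left)
  finally show ?thesis using collisions cross by linarith
qed

lemma prob_event_phi_F_ge:
  assumes dp: "is_dist m p" and dq: "is_dist m q"
    and bp: "\<forall>j\<in>{1..m}. p j \<le> b" and bq: "\<forall>j\<in>{1..m}. q j \<le> b"
    and "b > 0" "n > 0" "K \<le> n" "j0 \<in> {1..m}"
    and KK: "6 * (real n ^ 2 * b) \<le> real K * (real K - 1)"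
  shows "p j0 ^ K / 2 \<le> prob_event m n n p q p (phi_F m n n)"
proof -
  define t where "t = real K * (real K - 1)"
  have "0 < 6 * (real n ^ 2 * b)" using assms(5,6) by simp
  then have t_pos: "t > 0" using KK unfolding t_def by linarith
  define typical where "typical x = (\<Sum>y\<in>seqs m n. \<Sum>z\<in>seqs m n.
      seq_prob q n y * seq_prob p n z * (if collision_stat m n x y z \<le> t then 1 else 0))" for x
  have typical: "1/2 \<le> typical x" if "x \<in> seqs m n" for x
  proof -
    have "1/2 \<le> 1 - 3 * (real n ^ 2 * b) / t"
      using KK t_pos unfolding t_def by (simp add: field_simps)
    also have "\<dots> \<le> 1 - (\<Sum>y\<in>seqs m n. \<Sum>z\<in>seqs m n.
        seq_prob q n y * seq_prob p n z * collision_stat m n x y z) / t"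
      using sum_seq_prob_collision_stat_le[OF dp dq bp bq _ that] assms(5) t_pos
      by (simp add: divide_right_mono)
    also have "\<dots> \<le> typical x"
      unfolding typical_def using seq_prob_nonneg[OF dq] seq_prob_nonneg[OF dp] t_pos
      by (intro markov_inequality_product sum_seq_prob dp dq) (auto simp: collision_stat_nonneg)
    finally show ?thesis .
  qed
  define prefix where "prefix x = (if \<forall>i<K. x i = j0 then 1 else (0::real))" for x
  have "(\<Sum>x\<in>seqs m n. seq_prob p n x * prefix x * typical x)
      \<le> prob_event m n n p q p (phi_F m n n)"
    unfolding prob_event_def typical_def sum_distrib_left
  proof (intro sum_mono)
    fix x y z assume xs: "x \<in> seqs m n" and ys: "y \<in> seqs m n" and zs: "z \<in> seqs m n"
    have "0 \<le> seq_prob p n x * seq_prob q n y * seq_prob p n z"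
      using seq_prob_nonneg[OF dp xs] seq_prob_nonneg[OF dq ys] seq_prob_nonneg[OF dp zs] by simp
    moreover have "phi_F m n n x y z" if "\<forall>i<K. x i = j0" "collision_stat m n x y z \<le> t"
      using phi_F_if_const_prefix[OF xs zs assms(6,7) that(1) assms(8)] that(2) unfolding t_def .
    ultimately show "seq_prob p n x * prefix x * (seq_prob q n y * seq_prob p n z
          * (if collision_stat m n x y z \<le> t then 1 else 0))
        \<le> seq_prob p n x * seq_prob q n y * seq_prob p n z * (if phi_F m n n x y z then 1 else 0)"
      unfolding prefix_def by auto
  qed
  moreover have "p j0 ^ K / 2 \<le> (\<Sum>x\<in>seqs m n. seq_prob p n x * prefix x * typical x)"
  proof -
    have "p j0 ^ K / 2 = (\<Sum>x\<in>seqs m n. seq_prob p n x * prefix x * (1/2))"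
      using sum_seq_prob_const_prefix[OF dp assms(7,8)] unfolding prefix_def
      by (simp flip: sum_divide_distrib)
    also have "\<dots> \<le> (\<Sum>x\<in>seqs m n. seq_prob p n x * prefix x * typical x)"
      using typical seq_prob_nonneg[OF dp] by (intro sum_mono mult_left_mono) (auto simp: prefix_def)
    finally show ?thesis .
  qed
  ultimately show ?thesis by linarith
qed

section \<open>The worst-case error\<close>

lemma prob_event_nonneg:
  assumes "is_dist m p" "is_dist m q" "is_dist m r"
  shows "0 \<le> prob_event m N n p q r E"
  unfolding prob_event_def using assms by (intro sum_nonneg) (simp add: seq_prob_nonneg)

lemma prob_event_le_1:
  assumes "is_dist m p" "is_dist m q" "is_dist m r"
  shows "prob_event m N n p q r E \<le> 1"
proof -
  have "prob_event m N n p q r E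
      \<le> (\<Sum>x\<in>seqs m N. \<Sum>y\<in>seqs m N. \<Sum>z\<in>seqs m n. seq_prob p N x * seq_prob q N y * seq_prob r n z)"
    unfolding prob_event_def using assms by (intro sum_mono) (simp add: seq_prob_nonneg)
  also have "\<dots> = 1"
    using assms by (simp add: sum_seq_prob mult.assoc flip: sum_distrib_left)
  finally show ?thesis .
qed

lemma avg_err_le_1:
  assumes "(p, q) \<in> Pclass m \<epsilon> c"
  shows "avg_err m N n \<phi> p q \<le> 1"
proof -
  have "is_dist m p" "is_dist m q" using assms unfolding Pclass_def by auto
  then show ?thesis
    using prob_event_le_1[of m p q p N n \<phi>] prob_event_le_1[of m p q q N n "\<lambda>x y z. \<not> \<phi> x y z"]
    unfolding avg_err_def by simp
qed

lemma worst_err_le_1: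
  assumes "Pclass m \<epsilon> c \<noteq> {}"
  shows "worst_err m N n \<epsilon> c \<phi> \<le> 1"
  unfolding worst_err_def using assms avg_err_le_1 by (intro cSup_least) auto

lemma avg_err_le_worst_err:
  assumes "(p, q) \<in> Pclass m \<epsilon> c"
  shows "avg_err m N n \<phi> p q \<le> worst_err m N n \<epsilon> c \<phi>"
  unfolding worst_err_def
proof (rule cSup_upper)
  show "avg_err m N n \<phi> p q \<in> (\<lambda>(p, q). avg_err m N n \<phi> p q) ` Pclass m \<epsilon> c"
    using assms by force
  show "bdd_above ((\<lambda>(p, q). avg_err m N n \<phi> p q) ` Pclass m \<epsilon> c)"
    using avg_err_le_1 by (intro bdd_aboveI[of _ 1]) auto
qed

lemma is_dist_exists_ge_inverse:
  assumes "is_dist m p" "m > 0"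
  obtains j where "j \<in> {1..m}" "1 / real m \<le> p j"
proof (rule ccontr)
  assume "\<not> thesis"
  with that have "(\<Sum>j\<in>{1..m}. p j) < (\<Sum>j\<in>{1..m}. 1 / real m)"
    using assms(2) by (intro sum_strict_mono) force+
  then show False using assms unfolding is_dist_def by simp
qed

lemma worst_err_phi_F_ge:
  assumes "c > 0" "Pclass m \<epsilon> c \<noteq> {}" "24 * c \<le> real m" "4 \<le> n"
  defines "K \<equiv> nat \<lceil>sqrt (6 * c * real n ^ 2 / real m)\<rceil> + 1"
  shows "(1 / real m) ^ K / 4 \<le> worst_err m n n \<epsilon> c (phi_F m n n)"
proof -
  define s where "s = sqrt (6 * c * real n ^ 2 / real m)"
  have m_pos: "real m > 0" using assms(1,3) by linarith
  obtain p q where pq: "(p, q) \<in> Pclass m \<epsilon> c" using assms(2) by auto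
  then have dp: "is_dist m p" and dq: "is_dist m q"
    and bp: "\<forall>j\<in>{1..m}. p j \<le> c / real m" and bq: "\<forall>j\<in>{1..m}. q j \<le> c / real m"
    unfolding Pclass_def by auto
  obtain j0 where j0: "j0 \<in> {1..m}" "1 / real m \<le> p j0"
    using is_dist_exists_ge_inverse[OF dp] m_pos by auto
  have s_nonneg: "0 \<le> s" unfolding s_def using assms(1) m_pos by simp
  have K_bounds: "s + 1 \<le> real K" "real K \<le> s + 2" unfolding K_def s_def[symmetric] using s_nonneg
    by linarith+
  have "6 * (real n ^ 2 * (c / real m)) = s * s" unfolding s_def using assms(1) m_pos by simp
  also have "\<dots> \<le> real K * (real K - 1)" using K_bounds s_nonneg by (intro mult_mono) auto
  finally have KK: "6 * (real n ^ 2 * (c / real m)) \<le> real K * (real K - 1)" .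
  have "6 * c / real m \<le> 1 / 4" using assms(3) m_pos by (simp add: field_simps)
  then have "6 * c / real m * real n ^ 2 \<le> 1 / 4 * real n ^ 2"
    by (rule mult_right_mono) simp
  then have "6 * c / real m * real n ^ 2 \<le> (real n / 2) ^ 2"
    by (simp add: power_divide)
  then have "s \<le> sqrt ((real n / 2) ^ 2)"
    unfolding s_def by (intro real_sqrt_le_mono) simp
  then have "K \<le> n" using K_bounds assms(4) by simp
  then have "p j0 ^ K / 2 \<le> prob_event m n n p q p (phi_F m n n)"
    using assms(1,4) m_pos by (intro prob_event_phi_F_ge[OF dp dq bp bq _ _ _ j0(1) KK]) auto
  moreover have "(1 / real m) ^ K \<le> p j0 ^ K" using j0(2) m_pos by (intro power_mono) auto
  moreover have "1/2 * prob_event m n n p q p (phi_F m n n) \<le> avg_err m n n (phi_F m n n) p q"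
    unfolding avg_err_def using prob_event_nonneg[OF dp dq dq] by simp
  ultimately show ?thesis using avg_err_le_worst_err[OF pq, of n n "phi_F m n n"] by linarith
qed

section \<open>Asymptotics\<close>

text \<open>For K <= sqrt(6 c n^2 / m) + 2 this bounds (ln 4 + K ln m) m / n^2; it vanishes when
  m = o(n^2 / (ln n)^2).\<close>
definition rate_deficit :: "real \<Rightarrow> real \<Rightarrow> real \<Rightarrow> real" where
  "rate_deficit c m n = ln 4 * (m / n^2) + 2 * sqrt (6 * c) * sqrt (m * (ln n)^2 / n^2)
     + 4 * (sqrt (m * (ln n)^2 / n^2) * sqrt (m / n^2))"

lemma ln_bound_div_rate_le_rate_deficit:
  fixes m n K c :: real
  assumes m: "m \<ge> 1" and n: "n \<ge> 1" and mn: "m \<le> n^2"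
    and K: "K \<le> sqrt (6 * c * n^2 / m) + 2" "K \<ge> 0"
  shows "(ln 4 + K * ln m) / (n^2 / m) \<le> rate_deficit c m n"
proof -
  define a where "a = sqrt m"
  have a: "a > 0" "a^2 = m" unfolding a_def using m by auto
  have ln0: "ln m \<ge> 0" "ln n \<ge> 0" using m n by auto
  have lnm: "ln m \<le> 2 * ln n"
  proof -
    have "ln m \<le> ln (n^2)" using m mn by (subst ln_le_cancel_iff) auto
    also have "\<dots> = 2 * ln n" using n by (simp add: ln_realpow)
    finally show ?thesis .
  qed
  have s1: "sqrt (6 * c * n^2 / m) = sqrt (6 * c) * n / a"
    using n a by (simp add: real_sqrt_mult real_sqrt_divide a_def)
  have s2: "sqrt (m * (ln n)^2 / n^2) = a * ln n / n"
    using n ln0 by (simp add: real_sqrt_mult real_sqrt_divide a_def)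
  have s3: "sqrt (m / n^2) = a / n"
    using n by (simp add: real_sqrt_divide a_def)
  have "(ln 4 + K * ln m) / (n^2 / m) = ln 4 * (m / n^2) + K * ln m * m / n^2"
    using n m by (simp add: field_simps)
  also have "K * ln m * m / n^2 \<le> (sqrt (6 * c) * n / a + 2) * (2 * ln n) * m / n^2"
    using K s1 ln0 lnm m n
    by (intro divide_right_mono mult_right_mono mult_mono) auto
  also have "\<dots> = 2 * sqrt (6 * c) * (a * ln n / n) + 4 * ((a * ln n / n) * (a / n))"
    using a n by (simp add: field_simps power2_eq_square a(2)[symmetric])
  finally show ?thesis unfolding rate_deficit_def s1 s2 s3 by simp
qed

lemma rate_deficit_tendsto_0:
  fixes n :: "nat \<Rightarrow> nat"
  assumes "(\<lambda>m. real m) \<in> o(\<lambda>m. real (n m) ^ 2)"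
    and "(\<lambda>m. real m) \<in> o(\<lambda>m. real (n m) ^ 2 / (ln (real (n m)))^2)"
  shows "(\<lambda>m. rate_deficit c (real m) (real (n m))) \<longlonglongrightarrow> 0"
proof -
  have v: "(\<lambda>m. real m / real (n m) ^ 2) \<longlonglongrightarrow> 0"
    using smalloD_tendsto[OF assms(1)] by simp
  have u: "(\<lambda>m. real m * (ln (real (n m)))^2 / real (n m) ^ 2) \<longlonglongrightarrow> 0"
    using smalloD_tendsto[OF assms(2)] by (simp add: divide_divide_eq_right)
  have "(\<lambda>m. rate_deficit c (real m) (real (n m)))
      \<longlonglongrightarrow> ln 4 * 0 + 2 * sqrt (6 * c) * sqrt 0 + 4 * (sqrt 0 * sqrt 0)"
    unfolding rate_deficit_def by (intro tendsto_intros u v)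
  then show ?thesis by simp
qed

lemma elog_worst_err_phi_F_div_rate_bounds:
  assumes "c > 0" "Pclass m \<epsilon> c \<noteq> {}" "24 * c \<le> real m" "4 \<le> n" "real m \<le> real n ^ 2"
  defines "e \<equiv> elog (worst_err m n n \<epsilon> c (phi_F m n n)) / ereal (rate n n m)"
  shows "ereal (- rate_deficit c (real m) (real n)) \<le> e" and "e \<le> 0"
proof -
  define w where "w = worst_err m n n \<epsilon> c (phi_F m n n)"
  define K where "K = nat \<lceil>sqrt (6 * c * real n ^ 2 / real m)\<rceil> + 1"
  have m: "1 \<le> real m" using assms(1,3) by (cases m) auto
  have "(1 / real m) ^ K / 4 \<le> w"
    unfolding w_def K_def by (rule worst_err_phi_F_ge[OF assms(1-4)])
  moreover have "0 < (1 / real m) ^ K / 4" using m by simp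
  ultimately have w_pos: "0 < w" and "ln ((1 / real m) ^ K / 4) \<le> ln w"
    by auto
  moreover have "ln ((1 / real m) ^ K / 4) = - (ln 4 + real K * ln (real m))"
    using m by (simp add: ln_div ln_realpow)
  ultimately have ln_w: "- (ln 4 + real K * ln (real m)) \<le> ln w" by simp
  have rate: "rate n n m = real n ^ 2 / real m" unfolding rate_def by (simp add: power2_eq_square)
  have rate_pos: "0 < real n ^ 2 / real m" using m assms(4) by simp
  have e: "e = ereal (ln w / (real n ^ 2 / real m))"
    unfolding e_def w_def[symmetric] rate using w_pos m assms(4) by (simp add: elog_def)
  have "0 \<le> sqrt (6 * c * real n ^ 2 / real m)" using assms(1) by simp
  then have "real K \<le> sqrt (6 * c * real n ^ 2 / real m) + 2" unfolding K_def by linarith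
  then have "(ln 4 + real K * ln (real m)) / (real n ^ 2 / real m) \<le> rate_deficit c (real m) (real n)"
    using m assms(1,4,5) by (intro ln_bound_div_rate_le_rate_deficit) auto
  moreover have "- (ln 4 + real K * ln (real m)) / (real n ^ 2 / real m) \<le> ln w / (real n ^ 2 / real m)"
    using ln_w rate_pos by (intro divide_right_mono) auto
  ultimately show "ereal (- rate_deficit c (real m) (real n)) \<le> e"
    unfolding e by (simp only: ereal_less_eq minus_divide_left[symmetric])
  have "w \<le> 1" unfolding w_def using worst_err_le_1[OF assms(2)] .
  then have "ln w / (real n ^ 2 / real m) \<le> 0"
    using w_pos rate_pos by (intro divide_nonpos_pos) auto
  then show "e \<le> 0" unfolding e by simp
qed

theorem theorem4:
  fixes n :: "nat \<Rightarrow> nat" and \<epsilon> c :: real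
  assumes eps_pos: "\<epsilon> > 0" and c_pos: "c > 0"
    and n_lim: "filterlim n at_top at_top"
    and n_small: "(\<lambda>m. real (n m)) \<in> o(\<lambda>m. real m)"
    and m_small: "(\<lambda>m. real m) \<in> o(\<lambda>m. real (n m) ^ 2)"
    and m_small_log: "(\<lambda>m. real m) \<in> o(\<lambda>m. real (n m) ^ 2 / (ln (real (n m)))^2)"
    and nonempty: "eventually (\<lambda>m. Pclass m \<epsilon> c \<noteq> {}) at_top"
  shows "err_exponent n n \<epsilon> c (\<lambda>m. phi_F m (n m) (n m)) = 0"
proof -
  define e where "e m = elog (worst_err m (n m) (n m) \<epsilon> c (phi_F m (n m) (n m)))
    / ereal (rate (n m) (n m) m)" for m
  have "24 * c \<le> real (nat \<lceil>24 * c\<rceil>)" by linarith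
  then have "eventually (\<lambda>m. 24 * c \<le> real m) at_top"
    using eventually_ge_at_top[of "nat \<lceil>24 * c\<rceil>"] by (auto elim!: eventually_mono)
  moreover have "eventually (\<lambda>m. 4 \<le> n m) at_top" using n_lim by (simp add: filterlim_at_top)
  moreover have "eventually (\<lambda>m. real m \<le> real (n m) ^ 2) at_top"
    using landau_o.smallD[OF m_small, of 1] by simp
  ultimately have bounds: "eventually (\<lambda>m. ereal (- rate_deficit c (real m) (real (n m))) \<le> e m
      \<and> e m \<le> 0) at_top"
    using nonempty unfolding e_def
    by eventually_elim (use elog_worst_err_phi_F_div_rate_bounds c_pos in blast)
  have "(\<lambda>m. ereal (- rate_deficit c (real m) (real (n m)))) \<longlonglongrightarrow> ereal (- 0)"
    by (intro tendsto_ereal tendsto_minus rate_deficit_tendsto_0 m_small m_small_log)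
  then have "e \<longlonglongrightarrow> 0"
    using bounds by (intro tendsto_sandwich[of _ e _ "\<lambda>_. 0"]) (auto elim: eventually_mono simp: zero_ereal_def)
  then have "limsup e = 0" by (intro lim_imp_Limsup) auto
  then show ?thesis unfolding err_exponent_def e_def by simp
qed

end
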